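(* Let $H$ be a bigraph and $S$ a non-trivial strong component of $H^+$. If there is an arc from a vertex of $S$ to a vertex $x\notin S$, then $\{x\}$ is a trivial strong component of $H^+$ and $x$ has out-degree $0$ in $H^+$. If there is an arc from a vertex $x\notin S$ to a vertex of $S$, then $\{x\}$ is a trivial strong component of $H^+$ and $x$ has in-degree $0$ in $H^+$. In particular, $H^+$ has no directed path between two distinct non-trivial strong components.
   Context: A bigraph is a bipartite graph $H$ with fixed bipartition $(B,W)$ (black/white colours). The pair-digraph $H^+$ has vertices all ordered pairs $(u,v)$ of distinct vertices of $H$, and arcs $(u,v)\to(u',v)$ whenever $u,v$ have the same colour, $uu'\in E(H)$, $vu'\notin E(H)$, and $(u,v)\to(u,v')$ whenever $u,v$ have different colours, $vv'\in E(H)$, $uv\notin E(H)$. A strong component is non-trivial if it has more than one vertex, trivial otherwise. *)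

theory Defs
  imports Main
begin

definition bigraph :: "'a set \<Rightarrow> 'a set \<Rightarrow> ('a \<Rightarrow> 'a \<Rightarrow> bool) \<Rightarrow> bool" where
  "bigraph B W E \<longleftrightarrow> B \<inter> W = {} \<and> finite (B \<union> W) \<and>
     (\<forall>x y. E x y \<longrightarrow> E y x) \<and>
     (\<forall>x y. E x y \<longrightarrow> (x \<in> B \<and> y \<in> W) \<or> (x \<in> W \<and> y \<in> B))"

definition same_colour :: "'a set \<Rightarrow> 'a set \<Rightarrow> 'a \<Rightarrow> 'a \<Rightarrow> bool" where
  "same_colour B W u v \<longleftrightarrow> (u \<in> B \<and> v \<in> B) \<or> (u \<in> W \<and> v \<in> W)"

definition pair_vertices :: "'a set \<Rightarrow> 'a set \<Rightarrow> ('a \<times> 'a) set" where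
  "pair_vertices B W = {(u, v). u \<in> B \<union> W \<and> v \<in> B \<union> W \<and> u \<noteq> v}"

definition pair_arc :: "'a set \<Rightarrow> 'a set \<Rightarrow> ('a \<Rightarrow> 'a \<Rightarrow> bool) \<Rightarrow> 'a \<times> 'a \<Rightarrow> 'a \<times> 'a \<Rightarrow> bool" where
  "pair_arc B W E p q \<longleftrightarrow> p \<in> pair_vertices B W \<and> q \<in> pair_vertices B W \<and>
     ((same_colour B W (fst p) (snd p) \<and> snd q = snd p \<and>
         E (fst p) (fst q) \<and> \<not> E (snd p) (fst q)) \<or>
      (\<not> same_colour B W (fst p) (snd p) \<and> fst q = fst p \<and>
         E (snd p) (snd q) \<and> \<not> E (fst p) (snd p)))"

definition pair_reach :: "'a set \<Rightarrow> 'a set \<Rightarrow> ('a \<Rightarrow> 'a \<Rightarrow> bool) \<Rightarrow> 'a \<times> 'a \<Rightarrow> 'a \<times> 'a \<Rightarrow> bool" where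
  "pair_reach B W E = (pair_arc B W E)\<^sup>*\<^sup>*"

definition pair_scc :: "'a set \<Rightarrow> 'a set \<Rightarrow> ('a \<Rightarrow> 'a \<Rightarrow> bool) \<Rightarrow> ('a \<times> 'a) set \<Rightarrow> bool" where
  "pair_scc B W E S \<longleftrightarrow> (\<exists>p \<in> pair_vertices B W.
      S = {q. pair_reach B W E p q \<and> pair_reach B W E q p})"

definition nontrivial :: "'b set \<Rightarrow> bool" where
  "nontrivial S \<longleftrightarrow> (\<exists>a b. a \<in> S \<and> b \<in> S \<and> a \<noteq> b)"

end

theory Submission
  imports Defs
begin

(* The pair-digraph H+ has two structural features that do all the work.
   (1) Reversal duality: swapping the coordinates of a pair, (u,v) \<mapsto> (v,u), reverses
       every arc of H+.  Hence it maps strong components to strong components and turns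
       statements about arcs leaving a component into statements about arcs entering one.
   (2) Return paths: if y \<rightarrow> x is an arc of H+ such that y has some in-neighbour and x has
       some out-neighbour, then x reaches y again by a short explicit walk (of length 3),
       built from the edges of H that witness the arcs involved.
   Every vertex of a non-trivial strong component S has an in-neighbour, so by (2) the head x
   of an arc leaving S must have out-degree 0 (otherwise x would lie in S); a vertex without
   out-arcs is a trivial strong component.  Arcs entering S are handled by (1).  Finally a
   walk from one non-trivial component S to another must leave S, and the first vertex
   outside S is a sink, which cannot lie in a non-trivial component. *)

lemma pair_scc_reach:
  assumes "pair_scc B W E S" "a \<in> S" "b \<in> S"
  shows "pair_reach B W E a b"
  using assms unfolding pair_scc_def pair_reach_def by (auto intro: rtranclp_trans)

lemma pair_scc_closed:
  assumes "pair_scc B W E S" "a \<in> S" "pair_reach B W E a x" "pair_reach B W E x a"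
  shows "x \<in> S"
  using assms unfolding pair_scc_def pair_reach_def by (auto intro: rtranclp_trans)

lemma pair_scc_eq:
  assumes "pair_scc B W E S" "b \<in> S"
  shows "S = {q. pair_reach B W E b q \<and> pair_reach B W E q b}"
  using pair_scc_reach[OF assms(1)] pair_scc_closed[OF assms] assms(2) by blast

lemma nontrivial_scc_has_succ:
  assumes "pair_scc B W E S" "nontrivial S" "y \<in> S"
  obtains t where "pair_arc B W E y t"
proof -
  obtain c where c: "c \<in> S" "c \<noteq> y" using assms(2,3) unfolding nontrivial_def by blast
  have "(pair_arc B W E)\<^sup>*\<^sup>* y c"
    using pair_scc_reach[OF assms(1,3) c(1)] by (simp add: pair_reach_def)
  with c(2) show thesis using that by (metis converse_rtranclpE)
qed

lemma nontrivial_scc_has_pred: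
  assumes "pair_scc B W E S" "nontrivial S" "y \<in> S"
  obtains t where "pair_arc B W E t y"
proof -
  obtain c where c: "c \<in> S" "c \<noteq> y" using assms(2,3) unfolding nontrivial_def by blast
  have "(pair_arc B W E)\<^sup>*\<^sup>* c y"
    using pair_scc_reach[OF assms(1) c(1) assms(3)] by (simp add: pair_reach_def)
  with c(2) show thesis using that by (metis rtranclp.cases)
qed

lemma sink_reach:
  assumes "\<forall>z. \<not> pair_arc B W E x z" "pair_reach B W E x q"
  shows "q = x"
  using assms(2,1) unfolding pair_reach_def by (metis converse_rtranclpE)

lemma sink_scc:
  assumes "x \<in> pair_vertices B W" "\<forall>z. \<not> pair_arc B W E x z"
  shows "pair_scc B W E {x}"
proof -
  have "{q. pair_reach B W E x q \<and> pair_reach B W E q x} = {x}"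
    using sink_reach[OF assms(2)] rtranclp.rtrancl_refl unfolding pair_reach_def by blast
  then show ?thesis unfolding pair_scc_def using assms(1) by blast
qed

lemma walk_leaves_set:
  assumes "pair_reach B W E a b" "a \<in> S" "b \<notin> S"
  shows "\<exists>y x. y \<in> S \<and> x \<notin> S \<and> pair_arc B W E y x \<and> pair_reach B W E x b"
  using assms unfolding pair_reach_def
proof (induction rule: converse_rtranclp_induct)
  case base
  then show ?case by simp
next
  case (step a c)
  then show ?case by (cases "c \<in> S") blast+
qed

lemma swap_image_mem: "q \<in> prod.swap ` S \<longleftrightarrow> prod.swap q \<in> S"
  by (cases q) simp

lemma nontrivial_swap: "nontrivial (prod.swap ` S) \<longleftrightarrow> nontrivial S"
  unfolding nontrivial_def swap_image_mem by (metis swap_swap)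

lemma arc_vertices:
  assumes "pair_arc B W E p q"
  shows "p \<in> pair_vertices B W" "q \<in> pair_vertices B W"
  using assms unfolding pair_arc_def by auto

lemma arc_from_same_colour:
  assumes "pair_arc B W E (u, v) q" "same_colour B W u v"
  obtains u' where "q = (u', v)" "E u u'" "\<not> E v u'"
  using assms unfolding pair_arc_def by (cases q) auto

lemma arc_from_diff_colour:
  assumes "pair_arc B W E (u, v) q" "\<not> same_colour B W u v"
  obtains v' where "q = (u, v')" "E v v'" "\<not> E u v" "v' \<noteq> u"
  using assms unfolding pair_arc_def pair_vertices_def by (cases q) auto

lemma same_colour_sym: "same_colour B W a b \<longleftrightarrow> same_colour B W b a"
  unfolding same_colour_def by blast

context
  fixes B W :: "'a set" and E :: "'a \<Rightarrow> 'a \<Rightarrow> bool"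
  assumes bg: "bigraph B W E"
begin

lemma edge_ends:
  assumes "E a b"
  shows "a \<in> B \<union> W" "b \<in> B \<union> W" "E b a"
  using assms bg unfolding bigraph_def by blast+

lemma colour_flip:
  assumes "a \<in> B \<union> W" "E b c"
  shows "same_colour B W a c \<longleftrightarrow> \<not> same_colour B W a b"
  using assms bg unfolding bigraph_def same_colour_def by blast

lemma arc_same_colour_intro:
  assumes "v \<in> B \<union> W" "same_colour B W u v" "u \<noteq> v" "E u u'" "\<not> E v u'"
  shows "pair_arc B W E (u, v) (u', v)"
proof -
  have "u \<in> B \<union> W" "u' \<in> B \<union> W" using edge_ends assms(4) by auto
  moreover have "u' \<noteq> v"
    using colour_flip[OF assms(1,4)] assms(1,2) unfolding same_colour_def by blast
  ultimately show ?thesis using assms unfolding pair_arc_def pair_vertices_def by auto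
qed

lemma arc_diff_colour_intro:
  assumes "u \<in> B \<union> W" "\<not> same_colour B W u v" "\<not> E u v" "E v v'" "v' \<noteq> u"
  shows "pair_arc B W E (u, v) (u, v')"
proof -
  have "v \<in> B \<union> W" "v' \<in> B \<union> W" using edge_ends assms(4) by auto
  moreover have "u \<noteq> v" using assms(1,2) unfolding same_colour_def by blast
  ultimately show ?thesis using assms unfolding pair_arc_def pair_vertices_def by auto
qed

section \<open>Reversal duality\<close>

text \<open>Swapping the coordinates reverses every arc of H+: the same-coloured arc
  (u,v) \<rightarrow> (u',v) becomes the differently coloured arc (v,u') \<rightarrow> (v,u), and vice versa.\<close>
lemma arc_swap:
  assumes "pair_arc B W E p q"
  shows "pair_arc B W E (prod.swap q) (prod.swap p)"
proof -
  obtain u v where p: "p = (u, v)" by fastforce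
  have uv: "u \<in> B \<union> W" "v \<in> B \<union> W" "u \<noteq> v"
    using arc_vertices(1)[OF assms] unfolding p pair_vertices_def by auto
  show ?thesis
  proof (cases "same_colour B W u v")
    case True
    then obtain u' where q: "q = (u', v)" and e: "E u u'" "\<not> E v u'"
      using arc_from_same_colour assms unfolding p by metis
    have "\<not> same_colour B W v u'"
      using colour_flip[OF uv(2) e(1)] True same_colour_sym[of B W u v] by blast
    then have "pair_arc B W E (v, u') (v, u)"
      using arc_diff_colour_intro uv e edge_ends(3) by metis
    then show ?thesis unfolding p q by simp
  next
    case False
    then obtain v' where q: "q = (u, v')" and e: "E v v'" "\<not> E u v" "v' \<noteq> u"
      using arc_from_diff_colour assms unfolding p by metis
    have "same_colour B W v' u"
      using colour_flip[OF uv(1) e(1)] False same_colour_sym[of B W v' u] by blast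
    then have "pair_arc B W E (v', u) (v, u)"
      using arc_same_colour_intro uv e edge_ends(3) by metis
    then show ?thesis unfolding p q by simp
  qed
qed

lemma reach_swap:
  assumes "pair_reach B W E p q"
  shows "pair_reach B W E (prod.swap q) (prod.swap p)"
  using assms unfolding pair_reach_def
proof (induction rule: rtranclp_induct)
  case base
  then show ?case by simp
next
  case (step q r)
  then show ?case using arc_swap by (metis converse_rtranclp_into_rtranclp)
qed

lemma reach_swap_iff:
  "pair_reach B W E (prod.swap q) (prod.swap p) \<longleftrightarrow> pair_reach B W E p q"
  using reach_swap[of "prod.swap q" "prod.swap p"] reach_swap[of p q] by auto

lemma scc_swap:
  assumes "pair_scc B W E S"
  shows "pair_scc B W E (prod.swap ` S)"
proof -
  obtain p where p: "p \<in> pair_vertices B W" and S: "S = {q. pair_reach B W E p q \<and> pair_reach B W E q p}"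
    using assms unfolding pair_scc_def by blast
  have "prod.swap ` S = {q. pair_reach B W E (prod.swap p) q \<and> pair_reach B W E q (prod.swap p)}"
  proof (intro set_eqI)
    fix q
    show "q \<in> prod.swap ` S \<longleftrightarrow> q \<in> {q. pair_reach B W E (prod.swap p) q \<and> pair_reach B W E q (prod.swap p)}"
      unfolding swap_image_mem S
      using reach_swap_iff[of "prod.swap q" p] reach_swap_iff[of p "prod.swap q"] by auto
  qed
  moreover have "prod.swap p \<in> pair_vertices B W" using p unfolding pair_vertices_def by auto
  ultimately show ?thesis unfolding pair_scc_def by blast
qed

section \<open>Return paths\<close>

text \<open>If y is same-coloured, x reaches y through t;
  if y is differently coloured, x reaches y through z.\<close>
lemma return_path:
  assumes yx: "pair_arc B W E y x" and ty: "pair_arc B W E t y" and xz: "pair_arc B W E x z"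
  shows "pair_reach B W E x y"
proof -
  obtain u v where y: "y = (u, v)" by fastforce
  have uv: "u \<in> B \<union> W" "v \<in> B \<union> W" "u \<noteq> v"
    using arc_vertices(1)[OF yx] unfolding y pair_vertices_def by auto
  show ?thesis
  proof (cases "same_colour B W u v")
    case True
    obtain u' where x: "x = (u', v)" and uu': "E u u'" "\<not> E v u'"
      using arc_from_same_colour yx True unfolding y by metis
    obtain a b where t: "t = (a, b)" by fastforce
    have "\<not> same_colour B W a b"
    proof
      assume "same_colour B W a b"
      then obtain a' where "y = (a', b)" "E a a'" using arc_from_same_colour ty unfolding t by metis
      then have "u = a'" "v = b" "E a u" unfolding y by auto
      then show False
        using colour_flip[OF uv(2) \<open>E a u\<close>] True \<open>same_colour B W a b\<close>
          same_colour_sym[of B W u v] same_colour_sym[of B W a v] by blast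
    qed
    then obtain b' where "y = (a, b')" "E b b'" "\<not> E a b"
      using arc_from_diff_colour ty unfolding t by metis
    then have t': "t = (u, b)" and vb: "E v b" "\<not> E u b"
      using edge_ends(3) unfolding t y by auto
    have u'v: "\<not> same_colour B W u' v"
      using colour_flip[OF uv(2) uu'(1)] True same_colour_sym[of B W v u'] same_colour_sym[of B W u v]
      by blast
    have u'b: "same_colour B W u' b"
      using colour_flip[OF edge_ends(2)[OF uu'(1)] vb(1)] u'v by blast
    have "pair_arc B W E x (u', b)"
      unfolding x using arc_diff_colour_intro[OF edge_ends(2)[OF uu'(1)] u'v] uu' vb edge_ends(3)
      by metis
    moreover have "pair_arc B W E (u', b) t"
      unfolding t' using arc_same_colour_intro[OF edge_ends(2)[OF vb(1)] u'b] uu' vb edge_ends(3)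
      by metis
    ultimately show ?thesis using ty unfolding pair_reach_def
      by (meson converse_rtranclp_into_rtranclp rtranclp.rtrancl_refl)
  next
    case False
    obtain v' where x: "x = (u, v')" and vv': "E v v'" "\<not> E u v" "v' \<noteq> u"
      using arc_from_diff_colour yx False unfolding y by metis
    have uv': "same_colour B W u v'" using colour_flip[OF uv(1) vv'(1)] False by blast
    obtain a' where z: "z = (a', v')" and ua': "E u a'" "\<not> E v' a'"
      using arc_from_same_colour xz uv' unfolding x by metis
    have a'v': "\<not> same_colour B W a' v'"
      using colour_flip[OF edge_ends(2)[OF vv'(1)] ua'(1)] uv' same_colour_sym[of B W a' v']
        same_colour_sym[of B W u v'] by blast
    have a'v: "same_colour B W a' v"
      using colour_flip[OF edge_ends(2)[OF ua'(1)] vv'(1)] a'v' by blast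
    have "pair_arc B W E z (a', v)"
      unfolding z using arc_diff_colour_intro[OF edge_ends(2)[OF ua'(1)] a'v'] ua' vv' edge_ends(3)
      by metis
    moreover have "pair_arc B W E (a', v) y"
      unfolding y using arc_same_colour_intro[OF uv(2) a'v] ua' vv' edge_ends(3) by metis
    ultimately show ?thesis using xz unfolding pair_reach_def
      by (meson converse_rtranclp_into_rtranclp rtranclp.rtrancl_refl)
  qed
qed

text \<open>The head of an arc leaving a non-trivial component is a sink: the tail has an
  in-neighbour, so an out-neighbour of the head would close a cycle through the component.\<close>
lemma arc_out_of_nontrivial_scc:
  assumes S: "pair_scc B W E S" "nontrivial S"
    and yx: "y \<in> S" "x \<notin> S" "pair_arc B W E y x"
  shows "pair_scc B W E {x} \<and> (\<forall>z. \<not> pair_arc B W E x z)"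
proof -
  obtain t where ty: "pair_arc B W E t y" using nontrivial_scc_has_pred[OF S yx(1)] .
  have sink: "\<forall>z. \<not> pair_arc B W E x z"
  proof (intro allI notI)
    fix z assume "pair_arc B W E x z"
    then have "pair_reach B W E x y" using return_path yx(3) ty by blast
    moreover have "pair_reach B W E y x" using yx(3) unfolding pair_reach_def by blast
    ultimately show False using pair_scc_closed[OF S(1) yx(1)] yx(2) by blast
  qed
  then show ?thesis using sink_scc arc_vertices(2)[OF yx(3)] by blast
qed

text \<open>The dual statement, obtained by reversing all arcs with the swap.\<close>
lemma arc_into_nontrivial_scc:
  assumes S: "pair_scc B W E S" "nontrivial S"
    and xy: "y \<in> S" "x \<notin> S" "pair_arc B W E x y"
  shows "pair_scc B W E {x} \<and> (\<forall>z. \<not> pair_arc B W E z x)"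
proof -
  have "pair_scc B W E {prod.swap x} \<and> (\<forall>z. \<not> pair_arc B W E (prod.swap x) z)"
  proof (rule arc_out_of_nontrivial_scc)
    show "pair_scc B W E (prod.swap ` S)" using scc_swap[OF S(1)] .
    show "nontrivial (prod.swap ` S)" using S(2) nontrivial_swap by blast
    show "prod.swap y \<in> prod.swap ` S" "prod.swap x \<notin> prod.swap ` S"
      using xy(1,2) by (simp_all add: swap_image_mem)
    show "pair_arc B W E (prod.swap y) (prod.swap x)" using arc_swap[OF xy(3)] .
  qed
  then have "pair_scc B W E (prod.swap ` {prod.swap x})" and "\<forall>z. \<not> pair_arc B W E z x"
    using scc_swap arc_swap by blast+
  then show ?thesis by simp
qed

text \<open>No walk joins two distinct non-trivial components: it would leave the first one into a
  sink, and a sink cannot belong to a non-trivial component.\<close>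
lemma no_walk_between_nontrivial_sccs:
  assumes S: "pair_scc B W E S" "nontrivial S" and S': "pair_scc B W E S'" "nontrivial S'"
    and "S' \<noteq> S" "a \<in> S" "b \<in> S'"
  shows "\<not> pair_reach B W E a b"
proof
  assume ab: "pair_reach B W E a b"
  have "b \<notin> S"
  proof
    assume "b \<in> S"
    then have "S = S'" using pair_scc_eq[OF S(1)] pair_scc_eq[OF S'(1) \<open>b \<in> S'\<close>] by simp
    with \<open>S' \<noteq> S\<close> show False by simp
  qed
  then obtain y x where yx: "y \<in> S" "x \<notin> S" "pair_arc B W E y x" "pair_reach B W E x b"
    using walk_leaves_set[OF ab \<open>a \<in> S\<close>] by blast
  have sink: "\<forall>z. \<not> pair_arc B W E x z" using arc_out_of_nontrivial_scc[OF S yx(1-3)] by blast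
  then have "b = x" using sink_reach yx(4) by metis
  then show False using nontrivial_scc_has_succ[OF S' \<open>b \<in> S'\<close>] sink by metis
qed

end

theorem corollary2p7:
  fixes B W :: "'a set" and E :: "'a \<Rightarrow> 'a \<Rightarrow> bool" and S :: "('a \<times> 'a) set"
  assumes "bigraph B W E"
    and "pair_scc B W E S" and "nontrivial S"
  shows "(\<forall>y x. y \<in> S \<and> x \<notin> S \<and> pair_arc B W E y x \<longrightarrow>
            pair_scc B W E {x} \<and> (\<forall>z. \<not> pair_arc B W E x z))
       \<and> (\<forall>y x. y \<in> S \<and> x \<notin> S \<and> pair_arc B W E x y \<longrightarrow>
            pair_scc B W E {x} \<and> (\<forall>z. \<not> pair_arc B W E z x))
       \<and> (\<forall>S'. pair_scc B W E S' \<and> nontrivial S' \<and> S' \<noteq> S \<longrightarrow>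
            (\<forall>a \<in> S. \<forall>b \<in> S'. \<not> pair_reach B W E a b \<and> \<not> pair_reach B W E b a))"
  using arc_out_of_nontrivial_scc[OF assms] arc_into_nontrivial_scc[OF assms]
    no_walk_between_nontrivial_sccs[OF assms(1) assms(2,3)]
    no_walk_between_nontrivial_sccs[OF assms(1) _ _ assms(2,3)]
  by blast

end
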